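(* Let $G$ and $H$ be countable discrete groups equipped with proper left-invariant metrics. If $G$ and $H$ have finite APC-decomposition complexity, then the wreath product $H\wr G$ (with a proper left-invariant metric) has finite APC-decomposition complexity.
   Context: $H\wr G=H^{(G)}\rtimes G$, where $H^{(G)}$ is the group of finitely supported functions $G\to H$ and $G$ acts by translation. Every countable group carries a proper left-invariant metric, unique up to coarse equivalence. A family $\mathcal{U}$ of metric subspaces of $(X,d)$ is $r$-disjoint if $d(x,y)>r$ whenever $x\in U$, $y\in U'$, $U\neq U'$ in $\mathcal{U}$. For families $\mathcal{X},\mathcal{Y}$ and $R\in\mathbb{R}^{\mathbb{N}}$, $\mathcal{X}\xrightarrow{R}\mathcal{Y}$ means: there is an integer $k$ such that for each $X\in\mathcal{X}$ there are subcollections $\mathcal{U}_1,\dots,\mathcal{U}_k\subseteq\mathcal{Y}$ of subspaces of $X$, each $\mathcal{U}_i$ being $R_i$-disjoint, with $\bigcup_i\mathcal{U}_i$ covering $X$. A family is bounded if the diameters of its members are uniformly bounded. $\mathfrak{C}_0$ is the class of bounded families; for an ordinal $\alpha>0$, $\mathfrak{C}_\alpha$ is the class of families $\mathcal{X}$ such that for every $R\in\mathbb{R}^{\mathbb{N}}$ there exist $\beta<\alpha$ and $\mathcal{Y}\in\mathfrak{C}_\beta$ with $\mathcal{X}\xrightarrow{R}\mathcal{Y}$. A metric space has finite APC-decomposition complexity if it is a member of some family belonging to $\mathfrak{C}_\alpha$ for some ordinal $\alpha$. *)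

theory Defs
  imports "HOL-Algebra.Algebra"
begin

definition proper_left_invariant_metric ::
  "('g, 'a) monoid_scheme \<Rightarrow> ('g \<Rightarrow> 'g \<Rightarrow> real) \<Rightarrow> bool" where
  "proper_left_invariant_metric G d \<longleftrightarrow>
     (\<forall>x\<in>carrier G. \<forall>y\<in>carrier G.
        (d x y = 0 \<longleftrightarrow> x = y) \<and> d x y = d y x \<and>
        (\<forall>z\<in>carrier G. d x z \<le> d x y + d y z)) \<and>
     (\<forall>g\<in>carrier G. \<forall>x\<in>carrier G. \<forall>y\<in>carrier G.
        d (g \<otimes>\<^bsub>G\<^esub> x) (g \<otimes>\<^bsub>G\<^esub> y) = d x y) \<and>
     (\<forall>x\<in>carrier G. \<forall>r::real. finite {y \<in> carrier G. d x y \<le> r})"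

text \<open>\<open>H \<wr> G = H^(G) \<rtimes> G\<close>: pairs (f, g) with f a finitely supported function
  from G to H (extensional outside carrier G) and g in G; G acts by left translation,
  \<open>(g \<cdot> f)(x) = f(g\<inverse> x)\<close>, and \<open>(f,g)(f',g') = (f \<cdot> (g \<cdot> f'), g g')\<close>.\<close>
definition wreath_product ::
  "('h, 'b) monoid_scheme \<Rightarrow> ('g, 'a) monoid_scheme \<Rightarrow> (('g \<Rightarrow> 'h) \<times> 'g) monoid" where
  "wreath_product H G =
    \<lparr> carrier = {(f, g). f \<in> extensional (carrier G) \<and> f \<in> carrier G \<rightarrow> carrier H \<and>
                        finite {x \<in> carrier G. f x \<noteq> \<one>\<^bsub>H\<^esub>} \<and> g \<in> carrier G},
      monoid.mult = (\<lambda>(f, g) (f', g').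
                ((\<lambda>x. if x \<in> carrier G then f x \<otimes>\<^bsub>H\<^esub> f' (inv\<^bsub>G\<^esub> g \<otimes>\<^bsub>G\<^esub> x) else undefined),
                 g \<otimes>\<^bsub>G\<^esub> g')),
      monoid.one = ((\<lambda>x. if x \<in> carrier G then \<one>\<^bsub>H\<^esub> else undefined), \<one>\<^bsub>G\<^esub>) \<rparr>"

text \<open>Families are sets of subspaces of one ambient (pseudo)metric \<open>d\<close>; subspaces carry
  the restricted metric.\<close>

definition r_disjoint :: "('a \<Rightarrow> 'a \<Rightarrow> real) \<Rightarrow> real \<Rightarrow> 'a set set \<Rightarrow> bool" where
  "r_disjoint d r UU \<longleftrightarrow>
     (\<forall>U\<in>UU. \<forall>U'\<in>UU. U \<noteq> U' \<longrightarrow> (\<forall>x\<in>U. \<forall>y\<in>U'. d x y > r))"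

definition bounded_family :: "('a \<Rightarrow> 'a \<Rightarrow> real) \<Rightarrow> 'a set set \<Rightarrow> bool" where
  "bounded_family d XX \<longleftrightarrow> (\<exists>B::real. \<forall>A\<in>XX. \<forall>x\<in>A. \<forall>y\<in>A. d x y \<le> B)"

text \<open>\<open>XX \<rightarrow>R YY\<close>: the sequence \<open>R \<in> \<real>^\<nat>\<close> is indexed so that \<open>U_i\<close> is \<open>R_i\<close>-disjoint
  for \<open>i = 1..k\<close>.\<close>
definition decomposes :: "('a \<Rightarrow> 'a \<Rightarrow> real) \<Rightarrow> 'a set set \<Rightarrow> (nat \<Rightarrow> real) \<Rightarrow> 'a set set \<Rightarrow> bool" where
  "decomposes d XX R YY \<longleftrightarrow>
     (\<exists>k::nat. \<forall>A\<in>XX. \<exists>UU::nat \<Rightarrow> 'a set set.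
        (\<forall>i\<in>{1..k}. UU i \<subseteq> YY \<and> (\<forall>V\<in>UU i. V \<subseteq> A) \<and> r_disjoint d (R i) (UU i)) \<and>
        \<Union>(\<Union>i\<in>{1..k}. UU i) = A)"

text \<open>The union over all ordinals \<open>\<alpha>\<close> of the classes \<open>\<frak>C_\<alpha>\<close>, defined as the least class
  containing the bounded families and closed under the transfinite step.\<close>
inductive APC_class :: "('a \<Rightarrow> 'a \<Rightarrow> real) \<Rightarrow> 'a set set \<Rightarrow> bool" for d where
  bounded: "bounded_family d XX \<Longrightarrow> APC_class d XX"
| step: "(\<And>R. \<exists>YY. APC_class d YY \<and> decomposes d XX R YY) \<Longrightarrow> APC_class d XX"

definition finite_APC_complexity :: "('a \<Rightarrow> 'a \<Rightarrow> real) \<Rightarrow> 'a set \<Rightarrow> bool" where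
  "finite_APC_complexity d S \<longleftrightarrow> (\<exists>XX. S \<in> XX \<and> APC_class d XX)"

end

theory Submission
  imports Defs
begin

text \<open>The wreath product is an extension of \<open>G\<close> by the base group \<open>H^(G)\<close>, and by the
  fibering theorem finite APC-decomposition complexity passes to extensions: over a bounded set
  the fibres of a homomorphism lie in a translate of finitely many cosets of its kernel. For
  the base group, given a radius \<open>r\<close>, the finite \<open>r\<close>-ball is supported in a finite set
  \<open>E \<subseteq> G\<close>, so the cosets of \<open>H^E\<close> decompose \<open>H^(G)\<close> into \<open>r\<close>-disjoint pieces; and \<open>H^E\<close> has
  finite complexity by induction on \<open>E\<close>, as an iterated extension of copies of \<open>H\<close>.\<close>

section \<open>Decompositions of families\<close>

definition is_decomposition ::
  "('a \<Rightarrow> 'a \<Rightarrow> real) \<Rightarrow> (nat \<Rightarrow> real) \<Rightarrow> 'a set set \<Rightarrow> nat \<Rightarrow> 'a set \<Rightarrow> (nat \<Rightarrow> 'a set set) \<Rightarrow> bool"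
  where
  "is_decomposition d R YY k A UU \<longleftrightarrow>
     (\<forall>i\<in>{1..k}. UU i \<subseteq> YY \<and> (\<forall>V\<in>UU i. V \<subseteq> A) \<and> r_disjoint d (R i) (UU i)) \<and>
     \<Union>(\<Union>i\<in>{1..k}. UU i) = A"

definition decomposes_k ::
  "('a \<Rightarrow> 'a \<Rightarrow> real) \<Rightarrow> 'a set set \<Rightarrow> (nat \<Rightarrow> real) \<Rightarrow> 'a set set \<Rightarrow> nat \<Rightarrow> bool" where
  "decomposes_k d XX R YY k \<longleftrightarrow> (\<forall>A\<in>XX. \<exists>UU. is_decomposition d R YY k A UU)"

lemma decomposes_iff_ex_decomposes_k: "decomposes d XX R YY \<longleftrightarrow> (\<exists>k. decomposes_k d XX R YY k)"
  unfolding decomposes_def decomposes_k_def is_decomposition_def by simp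

lemma is_decompositionI:
  assumes "\<And>i. i \<in> {1..k} \<Longrightarrow> UU i \<subseteq> YY"
    and "\<And>i. i \<in> {1..k} \<Longrightarrow> r_disjoint d (R i) (UU i)"
    and "\<And>i V. i \<in> {1..k} \<Longrightarrow> V \<in> UU i \<Longrightarrow> V \<subseteq> A"
    and "\<And>x. x \<in> A \<Longrightarrow> \<exists>i\<in>{1..k}. \<exists>V\<in>UU i. x \<in> V"
  shows "is_decomposition d R YY k A UU"
  using assms unfolding is_decomposition_def by fastforce

lemma is_decompositionD:
  assumes "is_decomposition d R YY k A UU" "i \<in> {1..k}"
  shows "UU i \<subseteq> YY" "r_disjoint d (R i) (UU i)" "V \<in> UU i \<Longrightarrow> V \<subseteq> A"
  using assms unfolding is_decomposition_def by auto

lemma is_decomposition_coverE: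
  assumes "is_decomposition d R YY k A UU" "x \<in> A"
  obtains i V where "i \<in> {1..k}" "V \<in> UU i" "x \<in> V"
  using assms unfolding is_decomposition_def by auto

lemma r_disjoint_empty [simp]: "r_disjoint d r {}"
  by (simp add: r_disjoint_def)

lemma decomposes_kE:
  assumes "decomposes_k d XX R YY k" "A \<in> XX"
  obtains UU where "is_decomposition d R YY k A UU"
  using assms unfolding decomposes_k_def by blast

lemma decomposes_kI:
  "(\<And>A. A \<in> XX \<Longrightarrow> \<exists>UU. is_decomposition d R YY k A UU) \<Longrightarrow> decomposes_k d XX R YY k"
  unfolding decomposes_k_def by blast

lemma decomposes_k_refl: "decomposes_k d XX R XX 1"
proof (rule decomposes_kI)
  fix A assume "A \<in> XX"
  then have "is_decomposition d R XX 1 A (\<lambda>_. {A})"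
    by (intro is_decompositionI) (auto simp: r_disjoint_def)
  then show "\<exists>UU. is_decomposition d R XX 1 A UU" by blast
qed

lemma decomposes_k_subfamily:
  "decomposes_k d XX R YY k \<Longrightarrow> XX' \<subseteq> XX \<Longrightarrow> decomposes_k d XX' R YY k"
  unfolding decomposes_k_def by blast

lemma decomposes_k_Un:
  "decomposes_k d XX R YY k \<Longrightarrow> decomposes_k d XX' R YY k \<Longrightarrow> decomposes_k d (XX \<union> XX') R YY k"
  unfolding decomposes_k_def by blast

lemma decomposes_k_mono:
  assumes "decomposes_k d XX R YY k" "k \<le> k'" "YY \<subseteq> YY'"
  shows "decomposes_k d XX R YY' k'"
proof (rule decomposes_kI)
  fix A assume "A \<in> XX"
  then obtain UU where UU: "is_decomposition d R YY k A UU"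
    by (rule decomposes_kE[OF assms(1)])
  define UU' where "UU' i = (if i \<le> k then UU i else {})" for i
  have "is_decomposition d R YY' k' A UU'"
  proof (rule is_decompositionI)
    fix i assume i: "i \<in> {1..k'}"
    show "UU' i \<subseteq> YY'" "r_disjoint d (R i) (UU' i)"
      using is_decompositionD(1,2)[OF UU, of i] i assms(3) by (auto simp: UU'_def)
    show "V \<subseteq> A" if "V \<in> UU' i" for V
      using is_decompositionD(3)[OF UU, of i V] i that by (auto simp: UU'_def split: if_splits)
  next
    fix x assume "x \<in> A"
    then obtain i V where "i \<in> {1..k}" "V \<in> UU i" "x \<in> V"
      by (rule is_decomposition_coverE[OF UU])
    then show "\<exists>i\<in>{1..k'}. \<exists>V\<in>UU' i. x \<in> V"
      using assms(2) by (intro bexI[of _ i]) (auto simp: UU'_def)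
  qed
  then show "\<exists>UU. is_decomposition d R YY' k' A UU" by blast
qed

lemma atLeastAtMost_add_split: "{1..k1 + k2} = {1..k1} \<union> (\<lambda>i. i + k1) ` {1..k2::nat}"
proof -
  have "i \<in> (\<lambda>i. i + k1) ` {1..k2}" if "k1 < i" "i \<le> k1 + k2" for i
    using that by (intro image_eqI[of _ _ "i - k1"]) auto
  then show ?thesis by (auto simp: not_le)
qed

lemma decomposes_k_pairwise_Un:
  assumes "decomposes_k d XX R XX' k1" "decomposes_k d YY (\<lambda>i. R (i + k1)) YY' k2"
  shows "decomposes_k d {A \<union> B |A B. A \<in> XX \<and> B \<in> YY} R (XX' \<union> YY') (k1 + k2)"
proof (rule decomposes_kI)
  fix C assume "C \<in> {A \<union> B |A B. A \<in> XX \<and> B \<in> YY}"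
  then obtain A B where AB: "A \<in> XX" "B \<in> YY" "C = A \<union> B" by blast
  obtain UA where UA: "is_decomposition d R XX' k1 A UA"
    by (rule decomposes_kE[OF assms(1) AB(1)])
  obtain UB where UB: "is_decomposition d (\<lambda>i. R (i + k1)) YY' k2 B UB"
    by (rule decomposes_kE[OF assms(2) AB(2)])
  define UU where "UU i = (if i \<le> k1 then UA i else UB (i - k1))" for i
  have UU_shift: "UU (i + k1) = UB i" if "i \<in> {1..k2}" for i
    using that by (simp add: UU_def)
  have "is_decomposition d R (XX' \<union> YY') (k1 + k2) C UU"
  proof (rule is_decompositionI)
    fix i assume "i \<in> {1..k1 + k2}"
    then consider "i \<in> {1..k1}" | j where "j \<in> {1..k2}" "i = j + k1"
      unfolding atLeastAtMost_add_split by blast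
    then have "UU i \<subseteq> XX' \<union> YY' \<and> r_disjoint d (R i) (UU i) \<and> (\<forall>V\<in>UU i. V \<subseteq> C)"
    proof cases
      case 1
      then show ?thesis using is_decompositionD[OF UA 1] AB(3) by (auto simp: UU_def)
    next
      case (2 j)
      then show ?thesis using is_decompositionD[OF UB 2(1)] AB(3) UU_shift by auto
    qed
    then show "UU i \<subseteq> XX' \<union> YY'" "r_disjoint d (R i) (UU i)" "V \<in> UU i \<Longrightarrow> V \<subseteq> C" for V
      by auto
  next
    fix x assume "x \<in> C"
    then consider "x \<in> A" | "x \<in> B" using AB(3) by blast
    then show "\<exists>i\<in>{1..k1 + k2}. \<exists>V\<in>UU i. x \<in> V"
    proof cases
      case 1
      then obtain i V where "i \<in> {1..k1}" "V \<in> UA i" "x \<in> V"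
        by (rule is_decomposition_coverE[OF UA])
      then show ?thesis by (intro bexI[of _ i]) (auto simp: UU_def)
    next
      case 2
      then obtain i V where "i \<in> {1..k2}" "V \<in> UB i" "x \<in> V"
        by (rule is_decomposition_coverE[OF UB])
      then show ?thesis by (intro bexI[of _ "i + k1"]) (auto simp: UU_shift)
    qed
  qed
  then show "\<exists>UU. is_decomposition d R (XX' \<union> YY') (k1 + k2) C UU" by blast
qed

lemma bounded_family_subset:
  "bounded_family d XX \<Longrightarrow> XX' \<subseteq> XX \<Longrightarrow> bounded_family d XX'"
  unfolding bounded_family_def by (meson subsetD)

lemma bounded_family_Un:
  assumes "bounded_family d XX" "bounded_family d YY"
  shows "bounded_family d (XX \<union> YY)"
proof -
  obtain B1 B2 where "\<forall>A\<in>XX. \<forall>x\<in>A. \<forall>y\<in>A. d x y \<le> B1" "\<forall>A\<in>YY. \<forall>x\<in>A. \<forall>y\<in>A. d x y \<le> B2"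
    using assms unfolding bounded_family_def by blast
  then have "\<forall>A\<in>XX \<union> YY. \<forall>x\<in>A. \<forall>y\<in>A. d x y \<le> max B1 B2"
    by (metis Un_iff max.coboundedI1 max.coboundedI2)
  then show ?thesis unfolding bounded_family_def by blast
qed

lemma APC_class_subset:
  assumes "APC_class d XX" "XX' \<subseteq> XX"
  shows "APC_class d XX'"
  using assms
proof (induction arbitrary: XX' rule: APC_class.induct)
  case (bounded XX)
  then show ?case by (blast intro: APC_class.bounded bounded_family_subset)
next
  case (step XX)
  show ?case
  proof (rule APC_class.step)
    fix R
    obtain YY k where "APC_class d YY" "decomposes_k d XX R YY k"
      using step.IH[of R] unfolding decomposes_iff_ex_decomposes_k by blast
    then show "\<exists>YY. APC_class d YY \<and> decomposes d XX' R YY"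
      using decomposes_k_subfamily[OF _ step.prems] unfolding decomposes_iff_ex_decomposes_k by blast
  qed
qed

lemma APC_class_decomposes:
  assumes "APC_class d XX"
  shows "\<exists>YY k. APC_class d YY \<and> decomposes_k d XX R YY k"
  using assms
proof cases
  case bounded
  then show ?thesis using assms decomposes_k_refl by blast
next
  case step
  then show ?thesis unfolding decomposes_iff_ex_decomposes_k by blast
qed

lemma finite_APC_complexity_iff: "finite_APC_complexity d S \<longleftrightarrow> APC_class d {S}"
  unfolding finite_APC_complexity_def using APC_class_subset by blast

lemma APC_class_stepI:
  "(\<And>R. \<exists>YY k. APC_class d YY \<and> decomposes_k d XX R YY k) \<Longrightarrow> APC_class d XX"
  by (rule APC_class.step) (meson decomposes_iff_ex_decomposes_k)

lemma APC_class_Un_bounded: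
  assumes "bounded_family d XX" "APC_class d YY"
  shows "APC_class d (XX \<union> YY)"
  using assms(2)
proof (induction rule: APC_class.induct)
  case (bounded YY)
  then show ?case by (intro APC_class.bounded bounded_family_Un assms(1))
next
  case (step YY)
  show ?case
  proof (rule APC_class_stepI)
    fix R
    obtain YY' k where "APC_class d (XX \<union> YY')" "decomposes_k d YY R YY' k"
      using step.IH[of R] unfolding decomposes_iff_ex_decomposes_k by blast
    moreover have "decomposes_k d (XX \<union> YY) R (XX \<union> YY') (max 1 k)"
      by (rule decomposes_k_Un[OF decomposes_k_mono[OF decomposes_k_refl]
            decomposes_k_mono[OF calculation(2)]]) auto
    ultimately show "\<exists>ZZ k. APC_class d ZZ \<and> decomposes_k d (XX \<union> YY) R ZZ k" by blast
  qed
qed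

lemma APC_class_Un:
  assumes "APC_class d XX" "APC_class d YY"
  shows "APC_class d (XX \<union> YY)"
  using assms
proof (induction arbitrary: YY rule: APC_class.induct)
  case (bounded XX)
  then show ?case by (rule APC_class_Un_bounded)
next
  case (step XX)
  show ?case
  proof (rule APC_class_stepI)
    fix R
    obtain YY' k2 where YY': "APC_class d YY'" "decomposes_k d YY R YY' k2"
      using APC_class_decomposes[OF step.prems] by blast
    obtain XX' k1 where "APC_class d (XX' \<union> YY')" "decomposes_k d XX R XX' k1"
      using step.IH[of R] YY'(1) unfolding decomposes_iff_ex_decomposes_k by blast
    moreover have "decomposes_k d (XX \<union> YY) R (XX' \<union> YY') (max k1 k2)"
      by (rule decomposes_k_Un[OF decomposes_k_mono[OF calculation(2)] decomposes_k_mono[OF YY'(2)]])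
        auto
    ultimately show "\<exists>ZZ k. APC_class d ZZ \<and> decomposes_k d (XX \<union> YY) R ZZ k" by blast
  qed
qed

lemma APC_class_pairwise_Un:
  assumes "APC_class d XX" "APC_class d YY"
  shows "APC_class d {A \<union> B |A B. A \<in> XX \<and> B \<in> YY}"
proof (rule APC_class_stepI)
  fix R
  obtain XX' k1 where XX': "APC_class d XX'" "decomposes_k d XX R XX' k1"
    using APC_class_decomposes[OF assms(1)] by blast
  obtain YY' k2 where YY': "APC_class d YY'" "decomposes_k d YY (\<lambda>i. R (i + k1)) YY' k2"
    using APC_class_decomposes[OF assms(2)] by blast
  have "APC_class d (XX' \<union> YY')"
    using XX'(1) YY'(1) by (rule APC_class_Un)
  moreover have "decomposes_k d {A \<union> B |A B. A \<in> XX \<and> B \<in> YY} R (XX' \<union> YY') (k1 + k2)"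
    using XX'(2) YY'(2) by (rule decomposes_k_pairwise_Un)
  ultimately show "\<exists>ZZ k. APC_class d ZZ \<and> decomposes_k d {A \<union> B |A B. A \<in> XX \<and> B \<in> YY} R ZZ k"
    by blast
qed

lemma APC_class_finite_UNION:
  assumes "finite F" "\<And>h. h \<in> F \<Longrightarrow> APC_class d {S h}"
  shows "APC_class d {\<Union>h\<in>F. S h}"
  using assms
proof (induction F rule: finite_induct)
  case empty
  show ?case by (rule APC_class.bounded) (auto simp: bounded_family_def)
next
  case (insert h F)
  then have "APC_class d {A \<union> B |A B. A \<in> {S h} \<and> B \<in> {\<Union>h\<in>F. S h}}"
    by (intro APC_class_pairwise_Un) auto
  then show ?case by (rule APC_class_subset) auto
qed

definition sub_images :: "('a \<Rightarrow> 'a) set \<Rightarrow> 'a set \<Rightarrow> 'a set set \<Rightarrow> 'a set set" where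
  "sub_images \<Phi> S XX = {B. \<exists>A\<in>XX. A \<subseteq> S \<and> (\<exists>\<phi>\<in>\<Phi>. B \<subseteq> \<phi> ` A)}"

lemma sub_imagesI: "A \<in> XX \<Longrightarrow> A \<subseteq> S \<Longrightarrow> \<phi> \<in> \<Phi> \<Longrightarrow> B \<subseteq> \<phi> ` A \<Longrightarrow> B \<in> sub_images \<Phi> S XX"
  unfolding sub_images_def by blast

lemma r_disjoint_isometric_image:
  assumes "r_disjoint d r UU" "\<And>x y. x \<in> \<Union>UU \<Longrightarrow> y \<in> \<Union>UU \<Longrightarrow> d (\<phi> x) (\<phi> y) = d x y"
  shows "r_disjoint d r ((\<lambda>V. B \<inter> \<phi> ` V) ` UU)"
  unfolding r_disjoint_def
proof (intro ballI impI)
  fix U U' x y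
  assume "U \<in> (\<lambda>V. B \<inter> \<phi> ` V) ` UU" "U' \<in> (\<lambda>V. B \<inter> \<phi> ` V) ` UU" "U \<noteq> U'" "x \<in> U" "y \<in> U'"
  then obtain V V' a b where "V \<in> UU" "V' \<in> UU" "V \<noteq> V'" "a \<in> V" "b \<in> V'" "x = \<phi> a" "y = \<phi> b"
    by blast
  moreover from this have "d a b > r"
    using assms(1) unfolding r_disjoint_def by blast
  moreover from calculation have "d x y = d a b"
    using assms(2)[of a b] by blast
  ultimately show "d x y > r"
    by simp
qed

lemma decomposes_k_sub_images:
  assumes isometric: "\<And>\<phi> x y. \<phi> \<in> \<Phi> \<Longrightarrow> x \<in> S \<Longrightarrow> y \<in> S \<Longrightarrow> d (\<phi> x) (\<phi> y) = d x y"
    and "decomposes_k d XX R YY k"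
  shows "decomposes_k d (sub_images \<Phi> S XX) R (sub_images \<Phi> S YY) k"
proof (rule decomposes_kI)
  fix B assume "B \<in> sub_images \<Phi> S XX"
  then obtain A \<phi> where A: "A \<in> XX" "A \<subseteq> S" "\<phi> \<in> \<Phi>" "B \<subseteq> \<phi> ` A"
    unfolding sub_images_def by blast
  obtain UU where UU: "is_decomposition d R YY k A UU"
    by (rule decomposes_kE[OF assms(2) A(1)])
  have "is_decomposition d R (sub_images \<Phi> S YY) k B (\<lambda>i. (\<lambda>V. B \<inter> \<phi> ` V) ` UU i)"
  proof (rule is_decompositionI)
    fix i assume i: "i \<in> {1..k}"
    note UUi = is_decompositionD[OF UU i]
    show "(\<lambda>V. B \<inter> \<phi> ` V) ` UU i \<subseteq> sub_images \<Phi> S YY"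
      using UUi A by (auto intro!: sub_imagesI)
    show "r_disjoint d (R i) ((\<lambda>V. B \<inter> \<phi> ` V) ` UU i)"
      using UUi A by (intro r_disjoint_isometric_image isometric) auto
  next
    fix x assume "x \<in> B"
    then obtain a where "a \<in> A" "x = \<phi> a" using A(4) by blast
    then obtain i V where "i \<in> {1..k}" "V \<in> UU i" "x \<in> \<phi> ` V"
      by (metis imageI is_decomposition_coverE[OF UU])
    with \<open>x \<in> B\<close> show "\<exists>i\<in>{1..k}. \<exists>V\<in>(\<lambda>V. B \<inter> \<phi> ` V) ` UU i. x \<in> V" by blast
  qed blast
  then show "\<exists>UU. is_decomposition d R (sub_images \<Phi> S YY) k B UU" by blast
qed

lemma APC_class_sub_images:
  assumes isometric: "\<And>\<phi> x y. \<phi> \<in> \<Phi> \<Longrightarrow> x \<in> S \<Longrightarrow> y \<in> S \<Longrightarrow> d (\<phi> x) (\<phi> y) = d x y"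
    and "APC_class d XX"
  shows "APC_class d (sub_images \<Phi> S XX)"
  using assms(2)
proof (induction rule: APC_class.induct)
  case (bounded XX)
  then obtain c where c: "\<forall>A\<in>XX. \<forall>x\<in>A. \<forall>y\<in>A. d x y \<le> c"
    unfolding bounded_family_def by blast
  have "d x y \<le> c" if B: "B \<in> sub_images \<Phi> S XX" "x \<in> B" "y \<in> B" for B x y
  proof -
    obtain A \<phi> a b where "A \<in> XX" "A \<subseteq> S" "\<phi> \<in> \<Phi>" "a \<in> A" "b \<in> A" "x = \<phi> a" "y = \<phi> b"
      using B unfolding sub_images_def by blast
    then show ?thesis using c isometric by fastforce
  qed
  then show ?case
    by (intro APC_class.bounded) (unfold bounded_family_def, blast)
next
  case (step XX)
  show ?case
  proof (rule APC_class_stepI)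
    fix R
    obtain YY k where "APC_class d (sub_images \<Phi> S YY)" "decomposes_k d XX R YY k"
      using step.IH[of R] unfolding decomposes_iff_ex_decomposes_k by blast
    moreover from isometric this(2)
    have "decomposes_k d (sub_images \<Phi> S XX) R (sub_images \<Phi> S YY) k"
      by (rule decomposes_k_sub_images)
    ultimately show "\<exists>ZZ k. APC_class d ZZ \<and> decomposes_k d (sub_images \<Phi> S XX) R ZZ k"
      by blast
  qed
qed

definition bornologous_on ::
  "('a \<Rightarrow> 'a \<Rightarrow> real) \<Rightarrow> ('b \<Rightarrow> 'b \<Rightarrow> real) \<Rightarrow> 'a set \<Rightarrow> ('a \<Rightarrow> 'b) \<Rightarrow> bool" where
  "bornologous_on d e S p \<longleftrightarrow> (\<forall>r. \<exists>s. \<forall>x\<in>S. \<forall>y\<in>S. d x y \<le> r \<longrightarrow> e (p x) (p y) \<le> s)"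

lemma r_disjoint_preimage:
  assumes "r_disjoint e s UU" "\<And>x y. x \<in> S \<Longrightarrow> y \<in> S \<Longrightarrow> d x y \<le> r \<Longrightarrow> e (p x) (p y) \<le> s"
  shows "r_disjoint d r ((\<lambda>V. p -` V \<inter> S) ` UU)"
  unfolding r_disjoint_def
proof (intro ballI impI)
  fix U U' x y
  assume "U \<in> (\<lambda>V. p -` V \<inter> S) ` UU" "U' \<in> (\<lambda>V. p -` V \<inter> S) ` UU" "U \<noteq> U'" "x \<in> U" "y \<in> U'"
  then obtain V V' where "V \<in> UU" "V' \<in> UU" "V \<noteq> V'" "p x \<in> V" "p y \<in> V'" "x \<in> S" "y \<in> S"
    by blast
  then have "e (p x) (p y) > s"
    using assms(1) unfolding r_disjoint_def by blast
  then show "d x y > r"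
    using assms(2) \<open>x \<in> S\<close> \<open>y \<in> S\<close> by (meson not_le)
qed

lemma decomposes_k_preimages:
  assumes "decomposes_k e YY R' ZZ k"
    and "\<And>i x y. x \<in> S \<Longrightarrow> y \<in> S \<Longrightarrow> d x y \<le> R i \<Longrightarrow> e (p x) (p y) \<le> R' i"
  shows "decomposes_k d ((\<lambda>Y. p -` Y \<inter> S) ` YY) R ((\<lambda>Y. p -` Y \<inter> S) ` ZZ) k"
proof (rule decomposes_kI)
  fix A assume "A \<in> (\<lambda>Y. p -` Y \<inter> S) ` YY"
  then obtain Y where Y: "Y \<in> YY" "A = p -` Y \<inter> S" by blast
  obtain UU where UU: "is_decomposition e R' ZZ k Y UU"
    by (rule decomposes_kE[OF assms(1) Y(1)])
  have "is_decomposition d R ((\<lambda>Y. p -` Y \<inter> S) ` ZZ) k A (\<lambda>i. (\<lambda>V. p -` V \<inter> S) ` UU i)"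
  proof (rule is_decompositionI)
    fix i assume i: "i \<in> {1..k}"
    note UUi = is_decompositionD[OF UU i]
    show "(\<lambda>V. p -` V \<inter> S) ` UU i \<subseteq> (\<lambda>Y. p -` Y \<inter> S) ` ZZ"
      using UUi by blast
    show "r_disjoint d (R i) ((\<lambda>V. p -` V \<inter> S) ` UU i)"
      using UUi(2) assms(2) by (rule r_disjoint_preimage)
    show "V \<subseteq> A" if "V \<in> (\<lambda>V. p -` V \<inter> S) ` UU i" for V
      using that UUi Y(2) by blast
  next
    fix x assume "x \<in> A"
    then obtain i V where "i \<in> {1..k}" "V \<in> UU i" "p x \<in> V"
      using Y(2) is_decomposition_coverE[OF UU] by blast
    with \<open>x \<in> A\<close> Y(2) show "\<exists>i\<in>{1..k}. \<exists>V\<in>(\<lambda>V. p -` V \<inter> S) ` UU i. x \<in> V" by blast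
  qed
  then show "\<exists>UU. is_decomposition d R ((\<lambda>Y. p -` Y \<inter> S) ` ZZ) k A UU" by blast
qed

lemma APC_class_preimages:
  assumes "bornologous_on d e S p"
    and bounded_preimages: "\<And>ZZ. bounded_family e ZZ \<Longrightarrow> APC_class d ((\<lambda>Y. p -` Y \<inter> S) ` ZZ)"
    and "APC_class e YY"
  shows "APC_class d ((\<lambda>Y. p -` Y \<inter> S) ` YY)"
  using assms(3)
proof (induction rule: APC_class.induct)
  case (bounded YY)
  then show ?case by (rule bounded_preimages)
next
  case (step YY)
  show ?case
  proof (rule APC_class_stepI)
    fix R :: "nat \<Rightarrow> real"
    obtain s where "\<forall>r. \<forall>x\<in>S. \<forall>y\<in>S. d x y \<le> r \<longrightarrow> e (p x) (p y) \<le> s r"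
      using choice[OF assms(1)[unfolded bornologous_on_def]] by blast
    then have R': "\<And>i x y. x \<in> S \<Longrightarrow> y \<in> S \<Longrightarrow> d x y \<le> R i \<Longrightarrow> e (p x) (p y) \<le> (s \<circ> R) i"
      by simp
    obtain ZZ k where "APC_class d ((\<lambda>Y. p -` Y \<inter> S) ` ZZ)" "decomposes_k e YY (s \<circ> R) ZZ k"
      using step.IH[of "s \<circ> R"] unfolding decomposes_iff_ex_decomposes_k by blast
    moreover from this(2) R' have "decomposes_k d ((\<lambda>Y. p -` Y \<inter> S) ` YY) R ((\<lambda>Y. p -` Y \<inter> S) ` ZZ) k"
      by (rule decomposes_k_preimages)
    ultimately show "\<exists>ZZ k. APC_class d ZZ \<and> decomposes_k d ((\<lambda>Y. p -` Y \<inter> S) ` YY) R ZZ k"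
      by blast
  qed
qed

section \<open>Groups with proper left-invariant metrics\<close>

lemma left_invariant_metric_mult:
  "proper_left_invariant_metric A d \<Longrightarrow> g \<in> carrier A \<Longrightarrow> x \<in> carrier A \<Longrightarrow> y \<in> carrier A \<Longrightarrow>
    d (g \<otimes>\<^bsub>A\<^esub> x) (g \<otimes>\<^bsub>A\<^esub> y) = d x y"
  unfolding proper_left_invariant_metric_def by blast

lemma proper_metric_finite_ball: "proper_left_invariant_metric A d \<Longrightarrow> x \<in> carrier A \<Longrightarrow> finite {y \<in> carrier A. d x y \<le> r}"
  unfolding proper_left_invariant_metric_def by blast

lemma (in group) left_invariant_dist_eq:
  assumes "proper_left_invariant_metric G d" "a \<in> carrier G" "b \<in> carrier G"
  shows "d a b = d \<one> (inv a \<otimes> b)"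
  using left_invariant_metric_mult[OF assms(1) inv_closed[OF assms(2)] assms(2,3)] assms(2) by simp

definition left_translations :: "('a, 'b) monoid_scheme \<Rightarrow> ('a \<Rightarrow> 'a) set" where
  "left_translations A = (\<lambda>g x. g \<otimes>\<^bsub>A\<^esub> x) ` carrier A"

lemma (in group) l_coset_in_sub_images:
  assumes "g \<in> carrier G" "N \<in> XX" "N \<subseteq> carrier G" "B \<subseteq> g <# N"
  shows "B \<in> sub_images (left_translations G) (carrier G) XX"
  using assms by (intro sub_imagesI[of N _ _ "\<lambda>x. g \<otimes> x"]) (auto simp: left_translations_def l_coset_def)

lemma (in group) APC_class_l_cosets:
  assumes "proper_left_invariant_metric G d" "APC_class d XX"
  shows "APC_class d (sub_images (left_translations G) (carrier G) XX)"
  by (rule APC_class_sub_images[OF _ assms(2)])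
    (auto simp: left_translations_def left_invariant_metric_mult[OF assms(1)])

lemma (in group) hom_subgroup_inv_mult:
  assumes "group H" "subgroup K G" "\<pi> \<in> hom (G\<lparr>carrier := K\<rparr>) H" "a \<in> K" "b \<in> K"
  shows "\<pi> (inv a \<otimes> b) = inv\<^bsub>H\<^esub> \<pi> a \<otimes>\<^bsub>H\<^esub> \<pi> b"
proof -
  interpret group_hom "G\<lparr>carrier := K\<rparr>" H \<pi>
    using assms(1-3) by (intro group_hom.intro group_hom_axioms.intro subgroup.subgroup_is_group) simp_all
  have "inv a \<in> K"
    using assms(2,4) by (rule subgroup.m_inv_closed)
  then have "\<pi> (inv a \<otimes> b) = \<pi> (inv a) \<otimes>\<^bsub>H\<^esub> \<pi> b"
    using hom_mult[of "inv a" b] assms(5) by simp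
  also have "\<pi> (inv a) = inv\<^bsub>H\<^esub> \<pi> a"
    using hom_inv[of a] assms(2,4) by simp
  finally show ?thesis .
qed

lemma (in group) hom_bornologous_on:
  assumes "group H" "proper_left_invariant_metric G d" "proper_left_invariant_metric H e"
    and "subgroup K G" "\<pi> \<in> hom (G\<lparr>carrier := K\<rparr>) H"
  shows "bornologous_on d e K \<pi>"
  unfolding bornologous_on_def
proof
  fix r
  let ?ball = "{c \<in> carrier G. d \<one> c \<le> r}"
  have "finite ?ball"
    using proper_metric_finite_ball[OF assms(2)] by simp
  define s where "s = Max (insert 0 ((\<lambda>c. e \<one>\<^bsub>H\<^esub> (\<pi> c)) ` (?ball \<inter> K)))"
  have "e (\<pi> a) (\<pi> b) \<le> s" if "a \<in> K" "b \<in> K" "d a b \<le> r" for a b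
  proof -
    have ab: "a \<in> carrier G" "b \<in> carrier G"
      using that(1,2) subgroup.mem_carrier[OF assms(4)] by auto
    have \<pi>ab: "\<pi> a \<in> carrier H" "\<pi> b \<in> carrier H"
      using that(1,2) assms(5) by (auto simp: hom_def)
    have "inv a \<otimes> b \<in> K"
      using that(1,2) assms(4) by (simp add: subgroup.m_closed subgroup.m_inv_closed)
    moreover have "d \<one> (inv a \<otimes> b) \<le> r"
      using that(3) left_invariant_dist_eq[OF assms(2) ab] by simp
    ultimately have "inv a \<otimes> b \<in> ?ball \<inter> K"
      using ab by simp
    moreover have "e (\<pi> a) (\<pi> b) = e \<one>\<^bsub>H\<^esub> (\<pi> (inv a \<otimes> b))"
      using group.left_invariant_dist_eq[OF assms(1,3) \<pi>ab] hom_subgroup_inv_mult[OF assms(1,4,5) that(1,2)]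
      by simp
    ultimately show ?thesis
      unfolding s_def using \<open>finite ?ball\<close> by (intro Max_ge) auto
  qed
  then show "\<exists>s. \<forall>x\<in>K. \<forall>y\<in>K. d x y \<le> r \<longrightarrow> e (\<pi> x) (\<pi> y) \<le> s" by blast
qed

lemma (in group) r_disjoint_l_cosets:
  assumes "proper_left_invariant_metric G d" "subgroup N G" "subgroup K G" "N \<subseteq> K"
    and ball: "{c \<in> K. d \<one> c \<le> r} \<subseteq> N"
  shows "r_disjoint d r ((\<lambda>u. u <# N) ` K)"
  unfolding r_disjoint_def
proof (intro ballI impI)
  fix U U' x y
  assume "U \<in> (\<lambda>u. u <# N) ` K" "U' \<in> (\<lambda>u. u <# N) ` K" "U \<noteq> U'" "x \<in> U" "y \<in> U'"
  then obtain u u' where u: "u \<in> K" "u' \<in> K" "U = u <# N" "U' = u' <# N" "x \<in> u <# N" "y \<in> u' <# N"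
    by blast
  have uG: "u \<in> carrier G" "u' \<in> carrier G"
    using u(1,2) subgroup.mem_carrier[OF assms(3)] by auto
  have "x \<in> K" "y \<in> K"
    using u assms(3,4) by (auto simp: l_coset_def intro: subgroup.m_closed)
  then have xy: "x \<in> carrier G" "y \<in> carrier G" "inv x \<otimes> y \<in> K"
    using assms(3) by (auto simp: subgroup.m_closed subgroup.m_inv_closed subgroup.mem_carrier)
  have U: "U = x <# N" "U' = y <# N"
    using l_repr_independence[OF u(5) uG(1) assms(2)] l_repr_independence[OF u(6) uG(2) assms(2)] u(3,4)
    by simp_all
  show "d x y > r"
  proof (rule ccontr)
    assume "\<not> d x y > r"
    then have "inv x \<otimes> y \<in> N"
      using ball xy left_invariant_dist_eq[OF assms(1) xy(1,2)] by auto
    then have "y \<in> x <# N"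
      using xy(1,2) by (auto simp: l_coset_def m_assoc[symmetric] intro!: bexI[of _ "inv x \<otimes> y"])
    then have "U = U'"
      using U l_repr_independence[OF _ xy(1) assms(2)] by simp
    with \<open>U \<noteq> U'\<close> show False ..
  qed
qed

text \<open>\<open>K\<close> is the union of the left cosets of \<open>N\<close>, which are \<open>r\<close>-disjoint because \<open>N\<close>
  contains the \<open>r\<close>-ball of \<open>K\<close>.\<close>
lemma (in group) APC_class_subgroup_exhaustion:
  assumes metric: "proper_left_invariant_metric G d" and "subgroup K G"
    and exhaustion: "\<And>r. \<exists>N. subgroup N G \<and> N \<subseteq> K \<and> {c \<in> K. d \<one> c \<le> r} \<subseteq> N \<and> APC_class d {N}"
  shows "APC_class d {K}"
proof (rule APC_class_stepI)
  fix R :: "nat \<Rightarrow> real"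
  obtain N where N: "subgroup N G" "N \<subseteq> K" "{c \<in> K. d \<one> c \<le> R 1} \<subseteq> N" "APC_class d {N}"
    using exhaustion by blast
  have NG: "N \<subseteq> carrier G"
    using N(1) by (rule subgroup.subset)
  let ?YY = "sub_images (left_translations G) (carrier G) {N}"
  have "is_decomposition d R ?YY 1 K (\<lambda>_. (\<lambda>u. u <# N) ` K)"
  proof (rule is_decompositionI)
    show "(\<lambda>u. u <# N) ` K \<subseteq> ?YY"
      using NG subgroup.mem_carrier[OF assms(2)] by (auto intro: l_coset_in_sub_images)
    show "r_disjoint d (R i) ((\<lambda>u. u <# N) ` K)" if "i \<in> {1..1}" for i
      using that r_disjoint_l_cosets[OF metric N(1) assms(2) N(2,3)] by simp
    show "V \<subseteq> K" if "V \<in> (\<lambda>u. u <# N) ` K" for V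
      using that N(2) assms(2) by (auto simp: l_coset_def intro: subgroup.m_closed)
    show "\<exists>i\<in>{1..1::nat}. \<exists>V\<in>(\<lambda>u. u <# N) ` K. x \<in> V" if "x \<in> K" for x
      using that lcos_self[OF _ N(1)] subgroup.mem_carrier[OF assms(2)] by (intro bexI[of _ 1]) auto
  qed
  then have "decomposes_k d {K} R ?YY 1"
    by (intro decomposes_kI) auto
  moreover have "APC_class d ?YY"
    using metric N(4) by (rule APC_class_l_cosets)
  ultimately show "\<exists>YY k. APC_class d YY \<and> decomposes_k d {K} R YY k"
    by blast
qed

lemma (in group) APC_class_finite_union_l_cosets:
  assumes metric: "proper_left_invariant_metric G d" and "APC_class d {N}" "N \<subseteq> carrier G"
    and "finite F" "g ` F \<subseteq> carrier G"
  shows "APC_class d {\<Union>h\<in>F. g h <# N}"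
  using assms(4)
proof (rule APC_class_finite_UNION)
  fix h assume "h \<in> F"
  then show "APC_class d {g h <# N}"
    using assms(3,5)
    by (intro APC_class_subset[OF APC_class_l_cosets[OF metric assms(2)]] subsetI)
      (auto intro: l_coset_in_sub_images)
qed

text \<open>The witness is \<open>w0\<inverse> w = \<sigma> \<otimes> n\<close>, with \<open>\<sigma>\<close> the chosen preimage of \<open>\<pi> (w0\<inverse> w)\<close>
  and \<open>n\<close> in the kernel.\<close>
lemma (in group) close_fibre_subset_l_coset:
  assumes "group H" "proper_left_invariant_metric H e"
    and "subgroup K G" and hom: "\<pi> \<in> hom (G\<lparr>carrier := K\<rparr>) H"
    and "w0 \<in> K" "w \<in> K" "e (\<pi> w0) (\<pi> w) \<le> r"
  shows "w \<in> w0 <# (\<Union>h\<in>{h \<in> \<pi> ` K. e \<one>\<^bsub>H\<^esub> h \<le> r}. inv_into K \<pi> h <# kernel (G\<lparr>carrier := K\<rparr>) H \<pi>)"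
proof -
  interpret H: group H by (rule assms(1))
  have KG: "K \<subseteq> carrier G"
    using assms(3) by (rule subgroup.subset)
  have \<pi>K: "\<pi> ` K \<subseteq> carrier H"
    using hom by (auto simp: hom_def)
  define c where "c = inv w0 \<otimes> w"
  define \<sigma> where "\<sigma> = inv_into K \<pi> (\<pi> c)"
  define n where "n = inv \<sigma> \<otimes> c"
  have c: "c \<in> K" "\<pi> c = inv\<^bsub>H\<^esub> \<pi> w0 \<otimes>\<^bsub>H\<^esub> \<pi> w"
    unfolding c_def using assms(3,5,6)
    by (simp_all add: subgroup.m_closed subgroup.m_inv_closed hom_subgroup_inv_mult[OF assms(1,3) hom])
  have \<sigma>: "\<sigma> \<in> K" "\<pi> \<sigma> = \<pi> c"
    unfolding \<sigma>_def using c(1) by (auto intro: inv_into_into f_inv_into_f)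
  have "e \<one>\<^bsub>H\<^esub> (\<pi> c) \<le> r"
    using c(2) H.left_invariant_dist_eq[OF assms(2), of "\<pi> w0" "\<pi> w"] \<pi>K assms(5-7)
    by (simp add: image_subset_iff)
  then have "\<pi> c \<in> {h \<in> \<pi> ` K. e \<one>\<^bsub>H\<^esub> h \<le> r}"
    using c(1) by blast
  moreover have "n \<in> kernel (G\<lparr>carrier := K\<rparr>) H \<pi>"
    unfolding n_def kernel_def using \<sigma> c(1) \<pi>K assms(3)
    by (auto simp: subgroup.m_closed subgroup.m_inv_closed hom_subgroup_inv_mult[OF assms(1,3) hom])
  moreover have "w = w0 \<otimes> (\<sigma> \<otimes> n)"
  proof -
    have "\<sigma> \<in> carrier G" "w0 \<in> carrier G" "w \<in> carrier G"
      using \<sigma>(1) assms(5,6) KG by auto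
    then show ?thesis
      unfolding n_def c_def by (simp add: m_assoc[symmetric])
  qed
  ultimately show ?thesis
    unfolding l_coset_def \<sigma>_def by blast
qed

lemma (in group) APC_class_bounded_fibres:
  assumes "group H" and metric: "proper_left_invariant_metric G d"
    and metricH: "proper_left_invariant_metric H e"
    and "subgroup K G" and hom: "\<pi> \<in> hom (G\<lparr>carrier := K\<rparr>) H"
    and kernel: "APC_class d {kernel (G\<lparr>carrier := K\<rparr>) H \<pi>}" and "bounded_family e ZZ"
  shows "APC_class d ((\<lambda>Y. \<pi> -` Y \<inter> K) ` ZZ)"
proof -
  interpret H: group H by (rule assms(1))
  have KG: "K \<subseteq> carrier G"
    using assms(4) by (rule subgroup.subset)
  have \<pi>K: "\<pi> ` K \<subseteq> carrier H"
    using hom by (auto simp: hom_def)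
  obtain r where r: "\<forall>Y\<in>ZZ. \<forall>y\<in>Y. \<forall>y'\<in>Y. e y y' \<le> r"
    using assms(7) unfolding bounded_family_def by blast
  define U where "U = (\<Union>h\<in>{h \<in> \<pi> ` K. e \<one>\<^bsub>H\<^esub> h \<le> r}.
    inv_into K \<pi> h <# kernel (G\<lparr>carrier := K\<rparr>) H \<pi>)"
  have "finite {h \<in> \<pi> ` K. e \<one>\<^bsub>H\<^esub> h \<le> r}"
    by (rule rev_finite_subset[OF proper_metric_finite_ball[OF metricH H.one_closed]]) (use \<pi>K in auto)
  moreover have NG: "kernel (G\<lparr>carrier := K\<rparr>) H \<pi> \<subseteq> carrier G"
    using KG by (auto simp: kernel_def)
  moreover have \<sigma>G: "inv_into K \<pi> h \<in> carrier G" if "h \<in> \<pi> ` K" for h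
    using inv_into_into[OF that] KG by blast
  ultimately have APC_U: "APC_class d {U}"
    unfolding U_def by (intro APC_class_finite_union_l_cosets[OF metric kernel]) auto
  have "U \<subseteq> carrier G"
    unfolding U_def using l_coset_subset_G[OF NG \<sigma>G] by blast
  have "(\<lambda>Y. \<pi> -` Y \<inter> K) ` ZZ \<subseteq> sub_images (left_translations G) (carrier G) {U}"
  proof
    fix P assume "P \<in> (\<lambda>Y. \<pi> -` Y \<inter> K) ` ZZ"
    then obtain Y where Y: "Y \<in> ZZ" "P = \<pi> -` Y \<inter> K" by blast
    show "P \<in> sub_images (left_translations G) (carrier G) {U}"
    proof (cases "P = {}")
      case True
      then show ?thesis using \<open>U \<subseteq> carrier G\<close> by (intro l_coset_in_sub_images[of \<one> U]) auto
    next
      case False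
      then obtain w0 where "w0 \<in> K" "\<pi> w0 \<in> Y" using Y(2) by blast
      have "P \<subseteq> w0 <# U"
      proof
        fix w assume "w \<in> P"
        then have "w \<in> K" "e (\<pi> w0) (\<pi> w) \<le> r"
          using Y r \<open>\<pi> w0 \<in> Y\<close> by auto
        then show "w \<in> w0 <# U"
          unfolding U_def using \<open>w0 \<in> K\<close>
          by (intro close_fibre_subset_l_coset[OF assms(1) metricH assms(4) hom])
      qed
      then show ?thesis
        using \<open>w0 \<in> K\<close> KG \<open>U \<subseteq> carrier G\<close> by (intro l_coset_in_sub_images[of w0 U]) auto
    qed
  qed
  then show ?thesis
    by (rule APC_class_subset[OF APC_class_l_cosets[OF metric APC_U]])
qed

lemma (in group) APC_class_group_extension:
  assumes "group H" and metric: "proper_left_invariant_metric G d"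
    and metricH: "proper_left_invariant_metric H e"
    and "subgroup K G" and hom: "\<pi> \<in> hom (G\<lparr>carrier := K\<rparr>) H"
    and "APC_class e {carrier H}" and kernel: "APC_class d {kernel (G\<lparr>carrier := K\<rparr>) H \<pi>}"
  shows "APC_class d {K}"
proof -
  have "bornologous_on d e K \<pi>"
    using assms(1) metric metricH assms(4) hom by (rule hom_bornologous_on)
  moreover note APC_class_bounded_fibres[OF assms(1) metric metricH assms(4) hom kernel]
  ultimately have "APC_class d ((\<lambda>Y. \<pi> -` Y \<inter> K) ` {carrier H})"
    using assms(6) by (rule APC_class_preimages)
  moreover have "(\<lambda>Y. \<pi> -` Y \<inter> K) ` {carrier H} = {K}"
    using hom by (auto simp: hom_def)
  ultimately show ?thesis by simp
qed

section \<open>The wreath product\<close>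

locale wreath = G: group G + H: group H
  for G :: "('g, 'c) monoid_scheme" and H :: "('h, 'd) monoid_scheme"
begin

abbreviation W where "W \<equiv> wreath_product H G"

definition supp :: "('g \<Rightarrow> 'h) \<Rightarrow> 'g set" where
  "supp f = {x \<in> carrier G. f x \<noteq> \<one>\<^bsub>H\<^esub>}"

lemma carrier_W: "(f, g) \<in> carrier W \<longleftrightarrow>
    f \<in> extensional (carrier G) \<and> f \<in> carrier G \<rightarrow> carrier H \<and> finite (supp f) \<and> g \<in> carrier G"
  by (simp add: wreath_product_def supp_def)

lemma mult_W: "(f, g) \<otimes>\<^bsub>W\<^esub> (f', g') =
    ((\<lambda>x. if x \<in> carrier G then f x \<otimes>\<^bsub>H\<^esub> f' (inv\<^bsub>G\<^esub> g \<otimes>\<^bsub>G\<^esub> x) else undefined), g \<otimes>\<^bsub>G\<^esub> g')"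
  by (simp add: wreath_product_def)

lemma one_W: "\<one>\<^bsub>W\<^esub> = ((\<lambda>x. if x \<in> carrier G then \<one>\<^bsub>H\<^esub> else undefined), \<one>\<^bsub>G\<^esub>)"
  by (simp add: wreath_product_def)

lemma carrier_WD:
  assumes "w \<in> carrier W"
  shows "fst w \<in> extensional (carrier G)" "\<And>x. x \<in> carrier G \<Longrightarrow> fst w x \<in> carrier H"
    "finite (supp (fst w))" "snd w \<in> carrier G"
  using assms carrier_W[of "fst w" "snd w"] by auto

lemma snd_mult_W: "snd (u \<otimes>\<^bsub>W\<^esub> v) = snd u \<otimes>\<^bsub>G\<^esub> snd v"
  by (cases u, cases v) (simp add: mult_W)

lemma fst_mult_W:
  "x \<in> carrier G \<Longrightarrow> fst (u \<otimes>\<^bsub>W\<^esub> v) x = fst u x \<otimes>\<^bsub>H\<^esub> fst v (inv\<^bsub>G\<^esub> snd u \<otimes>\<^bsub>G\<^esub> x)"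
  by (cases u, cases v) (simp add: mult_W)

lemma mult_closed_W:
  assumes "u \<in> carrier W" "v \<in> carrier W"
  shows "u \<otimes>\<^bsub>W\<^esub> v \<in> carrier W"
proof -
  obtain f g f' g' where uv: "u = (f, g)" "v = (f', g')" by fastforce
  note u = carrier_WD[OF assms(1), unfolded uv fst_conv snd_conv]
  note v = carrier_WD[OF assms(2), unfolded uv fst_conv snd_conv]
  let ?h = "\<lambda>x. if x \<in> carrier G then f x \<otimes>\<^bsub>H\<^esub> f' (inv\<^bsub>G\<^esub> g \<otimes>\<^bsub>G\<^esub> x) else undefined"
  have "supp ?h \<subseteq> supp f \<union> (\<lambda>y. g \<otimes>\<^bsub>G\<^esub> y) ` supp f'"
  proof
    fix x assume x: "x \<in> supp ?h"
    then have xG: "x \<in> carrier G" by (simp add: supp_def)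
    show "x \<in> supp f \<union> (\<lambda>y. g \<otimes>\<^bsub>G\<^esub> y) ` supp f'"
    proof (cases "f x = \<one>\<^bsub>H\<^esub>")
      case True
      then have "inv\<^bsub>G\<^esub> g \<otimes>\<^bsub>G\<^esub> x \<in> supp f'"
        using x xG u(4) v(2) by (auto simp: supp_def)
      moreover have "x = g \<otimes>\<^bsub>G\<^esub> (inv\<^bsub>G\<^esub> g \<otimes>\<^bsub>G\<^esub> x)"
        using xG u(4) by (simp add: G.m_assoc[symmetric])
      ultimately show ?thesis by blast
    qed (use xG in \<open>simp add: supp_def\<close>)
  qed
  then have "finite (supp ?h)"
    using u(3) v(3) by (meson finite_UnI finite_imageI finite_subset)
  then show ?thesis
    using u v by (simp add: uv mult_W carrier_W extensional_def)
qed

lemma one_closed_W: "\<one>\<^bsub>W\<^esub> \<in> carrier W"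
  by (simp add: one_W carrier_W supp_def extensional_def)

lemma assoc_W:
  assumes "u \<in> carrier W" "v \<in> carrier W" "w \<in> carrier W"
  shows "u \<otimes>\<^bsub>W\<^esub> v \<otimes>\<^bsub>W\<^esub> w = u \<otimes>\<^bsub>W\<^esub> (v \<otimes>\<^bsub>W\<^esub> w)"
proof -
  obtain f g f' g' f'' g'' where uvw: "u = (f, g)" "v = (f', g')" "w = (f'', g'')"
    by (metis prod.exhaust)
  note u = carrier_WD[OF assms(1), unfolded uvw fst_conv snd_conv]
  note v = carrier_WD[OF assms(2), unfolded uvw fst_conv snd_conv]
  note w = carrier_WD[OF assms(3), unfolded uvw fst_conv snd_conv]
  have "inv\<^bsub>G\<^esub> (g \<otimes>\<^bsub>G\<^esub> g') \<otimes>\<^bsub>G\<^esub> x = inv\<^bsub>G\<^esub> g' \<otimes>\<^bsub>G\<^esub> (inv\<^bsub>G\<^esub> g \<otimes>\<^bsub>G\<^esub> x)" if "x \<in> carrier G" for x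
    using that u(4) v(4) by (simp add: G.inv_mult_group G.m_assoc)
  then show ?thesis
    using u(2,4) v(2,4) w(2,4) by (auto simp: uvw mult_W G.m_assoc H.m_assoc)
qed

definition inv_W :: "('g \<Rightarrow> 'h) \<times> 'g \<Rightarrow> ('g \<Rightarrow> 'h) \<times> 'g" where
  "inv_W w = ((\<lambda>x. if x \<in> carrier G then inv\<^bsub>H\<^esub> fst w (snd w \<otimes>\<^bsub>G\<^esub> x) else undefined),
    inv\<^bsub>G\<^esub> snd w)"

lemma inv_W_closed:
  assumes "w \<in> carrier W"
  shows "inv_W w \<in> carrier W"
proof -
  note w = carrier_WD[OF assms]
  let ?h = "\<lambda>x. if x \<in> carrier G then inv\<^bsub>H\<^esub> fst w (snd w \<otimes>\<^bsub>G\<^esub> x) else undefined"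
  have "supp ?h \<subseteq> (\<lambda>y. inv\<^bsub>G\<^esub> snd w \<otimes>\<^bsub>G\<^esub> y) ` supp (fst w)"
  proof
    fix x assume x: "x \<in> supp ?h"
    then have "x \<in> carrier G" by (simp add: supp_def)
    then have "snd w \<otimes>\<^bsub>G\<^esub> x \<in> supp (fst w)" "x = inv\<^bsub>G\<^esub> snd w \<otimes>\<^bsub>G\<^esub> (snd w \<otimes>\<^bsub>G\<^esub> x)"
      using x w(2,4) by (auto simp: supp_def G.m_assoc[symmetric])
    then show "x \<in> (\<lambda>y. inv\<^bsub>G\<^esub> snd w \<otimes>\<^bsub>G\<^esub> y) ` supp (fst w)" by blast
  qed
  then have "finite (supp ?h)"
    using w(3) by (meson finite_imageI finite_subset)
  then show ?thesis
    using w by (simp add: inv_W_def carrier_W extensional_def)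
qed

lemma inv_W_l_inv:
  assumes "w \<in> carrier W"
  shows "inv_W w \<otimes>\<^bsub>W\<^esub> w = \<one>\<^bsub>W\<^esub>"
  using carrier_WD[OF assms] by (cases w) (auto simp: inv_W_def mult_W one_W)

lemma l_one_W:
  assumes "w \<in> carrier W"
  shows "\<one>\<^bsub>W\<^esub> \<otimes>\<^bsub>W\<^esub> w = w"
  using carrier_WD[OF assms] by (cases w) (auto simp: mult_W one_W extensional_def)

lemma group_W: "group W"
proof (rule groupI)
  show "\<And>x y. x \<in> carrier W \<Longrightarrow> y \<in> carrier W \<Longrightarrow> x \<otimes>\<^bsub>W\<^esub> y \<in> carrier W"
    by (rule mult_closed_W)
  show "\<And>x y z. x \<in> carrier W \<Longrightarrow> y \<in> carrier W \<Longrightarrow> z \<in> carrier W \<Longrightarrow>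
      x \<otimes>\<^bsub>W\<^esub> y \<otimes>\<^bsub>W\<^esub> z = x \<otimes>\<^bsub>W\<^esub> (y \<otimes>\<^bsub>W\<^esub> z)"
    by (rule assoc_W)
  show "\<And>x. x \<in> carrier W \<Longrightarrow> \<exists>y\<in>carrier W. y \<otimes>\<^bsub>W\<^esub> x = \<one>\<^bsub>W\<^esub>"
    using inv_W_closed inv_W_l_inv by blast
qed (simp_all add: one_closed_W l_one_W)

sublocale W: group W
  by (rule group_W)

lemma inv_W_eq: "w \<in> carrier W \<Longrightarrow> inv\<^bsub>W\<^esub> w = inv_W w"
  by (rule W.inv_equality[OF inv_W_l_inv _ inv_W_closed])

text \<open>\<open>base_on E\<close> is the subgroup \<open>H^E\<close> of the base group \<open>H^(G)\<close> \<open>= base_on (carrier G)\<close>.\<close>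
definition base_on :: "'g set \<Rightarrow> (('g \<Rightarrow> 'h) \<times> 'g) set" where
  "base_on E = {w \<in> carrier W. snd w = \<one>\<^bsub>G\<^esub> \<and> supp (fst w) \<subseteq> E}"

lemma fst_mult_base:
  "snd u = \<one>\<^bsub>G\<^esub> \<Longrightarrow> x \<in> carrier G \<Longrightarrow> fst (u \<otimes>\<^bsub>W\<^esub> v) x = fst u x \<otimes>\<^bsub>H\<^esub> fst v x"
  by (simp add: fst_mult_W)

lemma fst_inv_base:
  "w \<in> carrier W \<Longrightarrow> snd w = \<one>\<^bsub>G\<^esub> \<Longrightarrow> x \<in> carrier G \<Longrightarrow> fst (inv\<^bsub>W\<^esub> w) x = inv\<^bsub>H\<^esub> fst w x"
  by (simp add: inv_W_eq inv_W_def)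

lemma subgroup_base_on: "subgroup (base_on E) W"
proof (rule W.subgroupI)
  show "base_on E \<subseteq> carrier W" "base_on E \<noteq> {}"
    using one_closed_W by (auto simp: base_on_def one_W supp_def)
next
  fix a assume a: "a \<in> base_on E"
  have "supp (fst (inv\<^bsub>W\<^esub> a)) \<subseteq> supp (fst a)"
    using a carrier_WD(2)[of a] by (auto simp: base_on_def supp_def fst_inv_base)
  moreover have "snd (inv\<^bsub>W\<^esub> a) = \<one>\<^bsub>G\<^esub>"
    using a by (simp add: base_on_def inv_W_eq inv_W_def)
  ultimately show "inv\<^bsub>W\<^esub> a \<in> base_on E"
    using a by (auto simp: base_on_def)
next
  fix a b assume ab: "a \<in> base_on E" "b \<in> base_on E"
  have "supp (fst (a \<otimes>\<^bsub>W\<^esub> b)) \<subseteq> supp (fst a) \<union> supp (fst b)"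
    using ab carrier_WD(2)[of b] by (auto simp: base_on_def supp_def fst_mult_base)
  then show "a \<otimes>\<^bsub>W\<^esub> b \<in> base_on E"
    using ab mult_closed_W by (auto simp: base_on_def snd_mult_W)
qed

lemma base_on_carrier: "base_on (carrier G) = kernel (W\<lparr>carrier := carrier W\<rparr>) G snd"
  using carrier_WD(4) by (auto simp: base_on_def kernel_def supp_def)

lemma snd_hom: "snd \<in> hom (W\<lparr>carrier := carrier W\<rparr>) G"
  using carrier_WD(4) by (auto simp: hom_def snd_mult_W)

lemma eval_hom: "x \<in> carrier G \<Longrightarrow> (\<lambda>w. fst w x) \<in> hom (W\<lparr>carrier := base_on E\<rparr>) H"
  using carrier_WD(2) by (auto simp: hom_def base_on_def fst_mult_base)

lemma kernel_eval:
  assumes "x \<in> carrier G" "x \<notin> E"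
  shows "kernel (W\<lparr>carrier := base_on (insert x E)\<rparr>) H (\<lambda>w. fst w x) = base_on E"
  using assms by (auto simp: kernel_def base_on_def supp_def)

lemma base_on_empty: "base_on {} = {\<one>\<^bsub>W\<^esub>}"
proof -
  have "w = \<one>\<^bsub>W\<^esub>" if "w \<in> base_on {}" for w
  proof -
    have "fst w = fst \<one>\<^bsub>W\<^esub>"
      using that carrier_WD(1)[of w] by (auto simp: base_on_def supp_def one_W extensional_def)
    then show ?thesis
      using that by (simp add: base_on_def one_W prod_eq_iff)
  qed
  moreover have "\<one>\<^bsub>W\<^esub> \<in> base_on {}"
    using subgroup.one_closed[OF subgroup_base_on] by simp
  ultimately show ?thesis by blast
qed

lemma APC_class_base_on:
  assumes metricW: "proper_left_invariant_metric W d" and metricH: "proper_left_invariant_metric H e"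
    and "APC_class e {carrier H}" and "finite E" "E \<subseteq> carrier G"
  shows "APC_class d {base_on E}"
  using assms(4,5)
proof (induction E rule: finite_induct)
  case empty
  show ?case
    by (rule APC_class.bounded) (auto simp: base_on_empty bounded_family_def)
next
  case (insert x E)
  then have x: "x \<in> carrier G" "x \<notin> E" and "APC_class d {base_on E}"
    by auto
  then have "APC_class d {kernel (W\<lparr>carrier := base_on (insert x E)\<rparr>) H (\<lambda>w. fst w x)}"
    by (simp add: kernel_eval)
  then show ?case
    by (rule W.APC_class_group_extension[OF H.is_group metricW metricH subgroup_base_on eval_hom[OF x(1)]
          assms(3)])
qed

lemma APC_class_base:
  assumes metricW: "proper_left_invariant_metric W d" and metricH: "proper_left_invariant_metric H e"
    and "APC_class e {carrier H}"
  shows "APC_class d {base_on (carrier G)}"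
  using metricW subgroup_base_on
proof (rule W.APC_class_subgroup_exhaustion)
  fix r
  let ?ball = "{c \<in> carrier W. d \<one>\<^bsub>W\<^esub> c \<le> r}"
  define E where "E = (\<Union>w\<in>?ball. supp (fst w))"
  have "finite E"
    unfolding E_def using proper_metric_finite_ball[OF metricW W.one_closed] carrier_WD(3) by auto
  moreover have "E \<subseteq> carrier G"
    unfolding E_def supp_def by blast
  ultimately have "APC_class d {base_on E}"
    using metricW metricH assms(3) by (rule APC_class_base_on[rotated 3])
  moreover have "{c \<in> base_on (carrier G). d \<one>\<^bsub>W\<^esub> c \<le> r} \<subseteq> base_on E"
    unfolding E_def base_on_def by blast
  moreover have "base_on E \<subseteq> base_on (carrier G)"
    unfolding base_on_def supp_def by blast
  ultimately show "\<exists>N. subgroup N W \<and> N \<subseteq> base_on (carrier G) \<and>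
      {c \<in> base_on (carrier G). d \<one>\<^bsub>W\<^esub> c \<le> r} \<subseteq> N \<and> APC_class d {N}"
    using subgroup_base_on by blast
qed

lemma APC_class_W:
  assumes metricW: "proper_left_invariant_metric W d"
    and metricG: "proper_left_invariant_metric G d\<^sub>G" and metricH: "proper_left_invariant_metric H e"
    and "APC_class d\<^sub>G {carrier G}" "APC_class e {carrier H}"
  shows "APC_class d {carrier W}"
proof (rule W.APC_class_group_extension[OF G.is_group metricW metricG W.subgroup_self snd_hom assms(4)])
  show "APC_class d {kernel (W\<lparr>carrier := carrier W\<rparr>) G snd}"
    using APC_class_base[OF metricW metricH assms(5)] by (simp add: base_on_carrier)
qed

end

theorem theorem4p11:
  fixes G :: "'g monoid" and H :: "'h monoid"
    and dG :: "'g \<Rightarrow> 'g \<Rightarrow> real" and dH :: "'h \<Rightarrow> 'h \<Rightarrow> real"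
    and dW :: "('g \<Rightarrow> 'h) \<times> 'g \<Rightarrow> ('g \<Rightarrow> 'h) \<times> 'g \<Rightarrow> real"
  assumes "group G" and "group H"
    and "countable (carrier G)" and "countable (carrier H)"
    and "proper_left_invariant_metric G dG" and "proper_left_invariant_metric H dH"
    and "finite_APC_complexity dG (carrier G)" and "finite_APC_complexity dH (carrier H)"
    and "proper_left_invariant_metric (wreath_product H G) dW"
  shows "finite_APC_complexity dW (carrier (wreath_product H G))"
proof -
  interpret wreath G H
    using assms(1,2) by (rule wreath.intro)
  show ?thesis
    using APC_class_W[OF assms(9,5,6)] assms(7,8) by (simp add: finite_APC_complexity_iff)
qed

end
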